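(* Let $m\ge2$. For $j\ge0$ write $J_0=[j]_{t^m}$, $J_1=[j+1]_{t^m}$, $J_2=[j+2]_{t^m}$, and write $\beta=\beta(m;t,q)$. Define, for all $j\ge0$ (with the special values at index $0$ taking precedence over the general formulas): $A_0=-q^{m-2}$; $A_{2j}=(-t)^mq^{m-2}J_0/J_1$ ($j\ge1$); $A_{2j+1}=\frac{(-1)^mJ_2}{J_1}\beta+\left(\frac{1-2J_2}{J_1}-\frac{t^{m(j+1)}J_2}{J_1^2}\right)q^m$; $B_{2j}=\beta+2\left(\frac1{J_1}-1\right)(-q)^m$; $B_{2j+1}=\beta-2\left(\frac{t^{m(j+1)}}{J_1}+1\right)(-q)^m$; $C_0=-t^mq^{m+2}$; $C_{2j}=-\beta q^2-\left(\frac1{J_1}-\frac{t^{mj}}{J_0}-2\right)(-q)^{m+2}$ ($j\ge1$); $C_{2j+1}=-q^m$; $k_{2j}=m-2$, $k_{2j+1}=0$; $a_0=-1$, $a_{2j}=(-t)^mJ_0/J_1$ ($j\ge1$), $a_{2j+1}=(-1)^mJ_2/J_1$; $D_{2j}=\beta-(-q)^m(1+t^m)$, $D_{2j+1}=1$. Then for every $n\ge0$, $\mathtt{NextABC}(A_n,B_n,C_n)=(A_{n+1},B_{n+1},C_{n+1};k_n,a_n,D_n)$.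
   Context: For $0\le d\le m-1$ let $\rho(m;t,d)=\frac{m}{m-d}\sum_{i=0}^{d}\binom{m-1-d+i}{i}\binom{m-1-i}{d-i}t^i$ and $\rho(m;t,m)=1+t^m$; set $\beta(m;t,q)=\sum_{d=0}^{m}\rho(m;t,d)(-q)^d$. $[n]_x=1+x+\cdots+x^{n-1}$. All objects are polynomials in $q$ with coefficients in $\mathbb{Q}(t)$. The map $\mathtt{NextABC}$ takes polynomials $A,B,C$ in $q$ with $A\ne0$, $C\ne0$, $B(0)=1$, $C(0)=0$ and returns $(A^*,B^*,C^*;k,a,D)$ defined as follows: $k\ge0$ and $a\ne0$ are such that $A=aq^k+O(q^{k+1})$; $D$ is the unique polynomial in $q$ of degree at most $k+1$ with $\frac{aq^kB}{A}-\frac{aq^kC}{B}=D+O(q^{k+2})$ (as power series in $q$); and $A^*=\bigl(-D^2A/a+BDq^k-Caq^{2k}\bigr)/q^{2k+2}$, $B^*=2AD/(aq^k)-B$, $C^*=-Aq^2/a$. *)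

theory Defs
  imports "HOL-Computational_Algebra.Computational_Algebra"
begin

text \<open>Coefficient field Q(t): the fraction field of Q[t]; t is the indeterminate.
  Objects of the paper are polynomials in q over this field, i.e. elements of type "K poly".\<close>

type_synonym K = "rat poly fract"

definition tt :: K where "tt = Fract [:0, 1:] 1"

definition qq :: "K poly" where "qq = [:0, 1:]"

definition qint :: "nat \<Rightarrow> K \<Rightarrow> K" where
  "qint n x = (\<Sum>i<n. x ^ i)"

definition rho :: "nat \<Rightarrow> nat \<Rightarrow> K" where
  "rho m d = (if d = m then 1 + tt ^ m
     else of_nat m / of_nat (m - d) *
          (\<Sum>i=0..d. of_nat ((m - 1 - d + i) choose i) * of_nat ((m - 1 - i) choose (d - i)) * tt ^ i))"

definition beta :: "nat \<Rightarrow> K poly" where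
  "beta m = (\<Sum>d=0..m. smult (rho m d) ((- qq) ^ d))"

text \<open>The map NextABC, as a relation: NextABC A B C A' B' C' k a D means that (A,B,C) lies
  in the domain of NextABC and NextABC(A,B,C) = (A',B',C';k,a,D).
  The divisions by q^(2k+2) and by a q^k in the definition of A*, B* are expressed
  multiplicatively (the polynomial ring is a domain, so this determines A*, B*, and
  asserts that the divisions are exact).\<close>
definition NextABC :: "K poly \<Rightarrow> K poly \<Rightarrow> K poly \<Rightarrow> K poly \<Rightarrow> K poly \<Rightarrow> K poly
    \<Rightarrow> nat \<Rightarrow> K \<Rightarrow> K poly \<Rightarrow> bool" where
  "NextABC A B C A' B' C' k a D \<longleftrightarrow>
     A \<noteq> 0 \<and> C \<noteq> 0 \<and> poly B 0 = 1 \<and> poly C 0 = 0 \<and>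
     a \<noteq> 0 \<and> (\<forall>i<k. coeff A i = 0) \<and> coeff A k = a \<and>
     degree D \<le> k + 1 \<and>
     (\<forall>i\<le>k + 1. fps_nth (fps_of_poly (smult a (qq ^ k) * B) / fps_of_poly A
                        - fps_of_poly (smult a (qq ^ k) * C) / fps_of_poly B) i = coeff D i) \<and>
     A' * qq ^ (2 * k + 2) = - smult (inverse a) (D ^ 2 * A) + B * D * qq ^ k - smult a (C * qq ^ (2 * k)) \<and>
     B' * smult a (qq ^ k) = smult 2 (A * D) - B * smult a (qq ^ k) \<and>
     C' = - smult (inverse a) (A * qq ^ 2)"

definition J :: "nat \<Rightarrow> nat \<Rightarrow> K" where "J m j = qint j (tt ^ m)"

definition Aseq :: "nat \<Rightarrow> nat \<Rightarrow> K poly" where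
  "Aseq m n = (let j = n div 2; J0 = J m j; J1 = J m (j + 1); J2 = J m (j + 2) in
     if even n then
       (if j = 0 then - (qq ^ (m - 2)) else smult ((- tt) ^ m * J0 / J1) (qq ^ (m - 2)))
     else smult ((- 1) ^ m * J2 / J1) (beta m)
          + smult ((1 - 2 * J2) / J1 - tt ^ (m * (j + 1)) * J2 / J1 ^ 2) (qq ^ m))"

definition Bseq7 :: "nat \<Rightarrow> nat \<Rightarrow> K poly" where
  "Bseq7 m n = (let j = n div 2; J1 = J m (j + 1) in
     if even n then beta m + smult (2 * (1 / J1 - 1)) ((- qq) ^ m)
     else beta m - smult (2 * (tt ^ (m * (j + 1)) / J1 + 1)) ((- qq) ^ m))"

definition Cseq :: "nat \<Rightarrow> nat \<Rightarrow> K poly" where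
  "Cseq m n = (let j = n div 2; J0 = J m j; J1 = J m (j + 1) in
     if even n then
       (if j = 0 then - (smult (tt ^ m) (qq ^ (m + 2)))
        else - beta m * qq ^ 2 - smult (1 / J1 - tt ^ (m * j) / J0 - 2) ((- qq) ^ (m + 2)))
     else - (qq ^ m))"

definition kseq :: "nat \<Rightarrow> nat \<Rightarrow> nat" where
  "kseq m n = (if even n then m - 2 else 0)"

definition aseq :: "nat \<Rightarrow> nat \<Rightarrow> K" where
  "aseq m n = (let j = n div 2; J0 = J m j; J1 = J m (j + 1); J2 = J m (j + 2) in
     if even n then (if j = 0 then - 1 else (- tt) ^ m * J0 / J1)
     else (- 1) ^ m * J2 / J1)"

definition Dseq :: "nat \<Rightarrow> nat \<Rightarrow> K poly" where
  "Dseq m n = (if even n then beta m - smult (1 + tt ^ m) ((- qq) ^ m) else 1)"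

end

theory Submission
  imports Defs
begin

text \<open>
  Write s = (-1)^m and Q = q^m.  Every A_n, B_n, C_n, D_n is a scalar multiple of q^(m-2) or a
  combination of beta and Q with coefficients in Q(t), and on such data NextABC is explicit.
  For even n, A = a q^(m-2) and C is divisible by q^2, so the series condition says that D is
  B modulo q^m, i.e. beta with its top term s (1 + t^m) Q removed; for odd n, A is a unit,
  C = -Q and a B - A is divisible by q^m, so D = 1.  In both cases A*, B*, C* are again of this
  form, with coefficients given by rational expressions in the old ones.  The theorem thus
  reduces to identities between these coefficients, which follow from s^2 = 1 and the
  recurrence J_(j+1) = 1 + t^m J_j.
\<close>

lemma tt_nonzero: "tt \<noteq> 0"
  by (simp add: tt_def Zero_fract_def eq_fract)

lemma tt_power_Fract: "tt ^ k = Fract ([:0, 1:] ^ k) 1"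
  by (induction k) (simp_all add: tt_def One_fract_def)

lemma J_Suc: "J m (Suc j) = 1 + tt ^ m * J m j"
  unfolding J_def qint_def sum.lessThan_Suc_shift by (simp add: sum_distrib_left)

lemma J_Suc_eq_add: "J m (Suc j) = J m j + tt ^ (m * j)"
  by (simp add: J_def qint_def power_mult)

lemma J_eq_Fract: "J m n = Fract (\<Sum>i<n. [:0, 1:] ^ (m * i)) 1"
proof (induction n)
  case 0
  show ?case by (simp add: J_def qint_def Zero_fract_def)
next
  case (Suc n)
  then show ?case by (simp add: J_Suc_eq_add tt_power_Fract)
qed

lemma J_nonzero:
  assumes "0 < n"
  shows "J m n \<noteq> 0"
proof -
  have "(1::rat) \<le> (\<Sum>i<n. 0 ^ (m * i))"
    using member_le_sum[of 0 "{..<n}" "\<lambda>i. (0::rat) ^ (m * i)"] assms by simp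
  then have "poly (\<Sum>i<n. [:0, 1::rat:] ^ (m * i)) 0 \<noteq> 0"
    by (simp add: poly_sum)
  then show ?thesis by (auto simp: J_eq_Fract Zero_fract_def eq_fract)
qed

lemma qq_nonzero: "qq \<noteq> 0"
  by (simp add: qq_def)

lemma qq_power_eq_monom: "qq ^ k = monom 1 k"
  by (simp add: qq_def monom_altdef)

lemma fps_of_poly_qq: "fps_of_poly qq = fps_X"
  by (simp add: qq_def fps_of_poly_pCons)

lemma power_minus_poly: "(- p) ^ n = smult ((- 1) ^ n) (p ^ n)"
  for p :: "'a::comm_ring_1 poly"
  by (induction n) (simp_all add: algebra_simps)

lemma coeff_beta_0:
  assumes "0 < m"
  shows "coeff (beta m) 0 = 1"
proof -
  have "coeff (beta m) 0 = (\<Sum>d=0..m. if d = 0 then rho m 0 else 0)"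
    unfolding beta_def coeff_sum power_minus_poly qq_power_eq_monom
    by (intro sum.cong) simp_all
  also have "\<dots> = 1"
    using assms by (simp add: rho_def)
  finally show ?thesis .
qed

lemma degree_beta_minus_top:
  assumes "0 < m"
  shows "degree (beta m - smult ((1 + tt ^ m) * (- 1) ^ m) (qq ^ m)) < m"
proof -
  have "beta m - smult ((1 + tt ^ m) * (- 1) ^ m) (qq ^ m) = (\<Sum>d<m. smult (rho m d) ((- qq) ^ d))"
    using assms by (simp add: beta_def atLeast0AtMost lessThan_Suc_atMost[symmetric] rho_def
        power_minus_poly)
  also have "degree \<dots> \<le> m - 1"
  proof (rule degree_sum_le)
    fix d assume "d \<in> {..<m}"
    then show "degree (smult (rho m d) ((- qq) ^ d)) \<le> m - 1"
      using degree_power_le[of "- qq" d] by (auto simp: qq_def)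
  qed simp
  finally show ?thesis
    using assms by simp
qed

lemma fps_divide_X_power_cancel:
  fixes f g :: "'a::field fps"
  assumes "g $ 0 \<noteq> 0"
  shows "(fps_X ^ k * f) / (fps_X ^ k * g) = f * inverse g"
  using assms by (simp add: div_mult_mult1 fps_divide_unit)

lemma fps_quotient_difference_nth:
  fixes A0 B C D V W :: "K poly"
  assumes A0: "coeff A0 0 \<noteq> 0" and B: "coeff B 0 \<noteq> 0"
    and B_approx: "smult a B = D * A0 + qq ^ (k + 2) * V"
    and C_approx: "smult a C = qq\<^sup>2 * W"
    and i: "i \<le> k + 1"
  shows "(fps_of_poly (smult a (qq ^ k) * B) / fps_of_poly (qq ^ k * A0)
      - fps_of_poly (smult a (qq ^ k) * C) / fps_of_poly B) $ i = coeff D i"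
proof -
  let ?F = fps_of_poly
  have A0_unit: "?F A0 $ 0 \<noteq> 0" and B_unit: "?F B $ 0 \<noteq> 0"
    using A0 B by simp_all
  have "?F (smult a (qq ^ k) * B) = fps_X ^ k * ?F (smult a B)"
    and "?F (qq ^ k * A0) = fps_X ^ k * ?F A0"
    by (simp_all add: fps_of_poly_mult fps_of_poly_power fps_of_poly_qq fps_of_poly_smult mult_ac)
  then have "?F (smult a (qq ^ k) * B) / ?F (qq ^ k * A0) = ?F (smult a B) * inverse (?F A0)"
    by (simp only: fps_divide_X_power_cancel[OF A0_unit])
  also have "\<dots> = ?F D + fps_X ^ (k + 2) * (?F V * inverse (?F A0))"
    using inverse_mult_eq_1'[OF A0_unit]
    by (simp add: B_approx fps_of_poly_add fps_of_poly_mult fps_of_poly_power fps_of_poly_qq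
        algebra_simps)
  finally have quot_B: "?F (smult a (qq ^ k) * B) / ?F (qq ^ k * A0)
      = ?F D + fps_X ^ (k + 2) * (?F V * inverse (?F A0))" .
  have "smult a (qq ^ k) * C = qq ^ k * smult a C"
    by simp
  also have "\<dots> = qq ^ (k + 2) * W"
    by (simp add: C_approx power_add mult.assoc power2_eq_square)
  finally have "smult a (qq ^ k) * C = qq ^ (k + 2) * W" .
  then have quot_C: "?F (smult a (qq ^ k) * C) / ?F B = fps_X ^ (k + 2) * (?F W * inverse (?F B))"
    using B_unit by (simp add: fps_divide_unit fps_of_poly_mult fps_of_poly_power fps_of_poly_qq
        mult.assoc)
  show ?thesis
    unfolding quot_B quot_C fps_sub_nth fps_add_nth fps_X_power_mult_nth using i by simp
qed

lemma NextABC_intro: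
  fixes A0 B C D V W A' B' C' :: "K poly"
  assumes A0: "coeff A0 0 = a" "a \<noteq> 0"
    and C: "C \<noteq> 0" "coeff C 0 = 0"
    and B: "coeff B 0 = 1"
    and D: "degree D \<le> k + 1"
    and B_approx: "smult a B = D * A0 + qq ^ (k + 2) * V"
    and C_approx: "smult a C = qq\<^sup>2 * W"
    and A': "A' * qq ^ (k + 2) = B * D - smult (inverse a) (D\<^sup>2 * A0) - smult a (C * qq ^ k)"
    and B': "smult a B' = smult 2 (A0 * D) - smult a B"
    and C': "C' = - smult (inverse a) (A0 * qq ^ (k + 2))"
  shows "NextABC (qq ^ k * A0) B C A' B' C' k a D"
proof -
  have fps_condition: "\<forall>i\<le>k + 1.
      fps_nth (fps_of_poly (smult a (qq ^ k) * B) / fps_of_poly (qq ^ k * A0)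
        - fps_of_poly (smult a (qq ^ k) * C) / fps_of_poly B) i = coeff D i"
    using fps_quotient_difference_nth[OF _ _ B_approx C_approx] A0 B by simp
  have "A' * qq ^ (2 * k + 2) = (A' * qq ^ (k + 2)) * qq ^ k"
    by (simp add: mult.assoc mult_2 flip: power_add)
  also have "\<dots> = - smult (inverse a) (D\<^sup>2 * (qq ^ k * A0)) + B * D * qq ^ k
      - smult a (C * qq ^ (2 * k))"
    unfolding A' by (simp add: algebra_simps power_mult power2_eq_square)
  finally have A'_eq: "A' * qq ^ (2 * k + 2) = - smult (inverse a) (D\<^sup>2 * (qq ^ k * A0))
      + B * D * qq ^ k - smult a (C * qq ^ (2 * k))" .
  have B'_eq: "B' * smult a (qq ^ k) = smult 2 (qq ^ k * A0 * D) - B * smult a (qq ^ k)"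
    using arg_cong[OF B', of "\<lambda>p. p * qq ^ k"] by (simp add: algebra_simps)
  have C'_eq: "C' = - smult (inverse a) (qq ^ k * A0 * qq\<^sup>2)"
    by (simp add: C' power_add power2_eq_square mult_ac)
  have "qq ^ k * A0 \<noteq> 0" "\<forall>i<k. coeff (qq ^ k * A0) i = 0" "coeff (qq ^ k * A0) k = a"
    using A0 by (auto simp: qq_power_eq_monom coeff_monom_mult qq_nonzero)
  moreover have "poly B 0 = 1" "poly C 0 = 0"
    using B C by (simp_all add: poly_0_coeff_0)
  ultimately show ?thesis
    unfolding NextABC_def using A0 C D fps_condition A'_eq B'_eq C'_eq by blast
qed

lemma NextABC_even_shape:
  fixes b :: "K poly" and a \<delta> \<gamma> \<kappa> \<epsilon> :: K
  assumes m: "2 \<le> m"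
    and b: "coeff b 0 = 1" "degree (b - smult \<gamma> (qq ^ m)) < m"
    and a: "a \<noteq> 0"
    and \<kappa>\<epsilon>: "\<kappa> \<noteq> 0 \<or> \<epsilon> \<noteq> 0"
    and shape: "A = smult a (qq ^ (m - 2))" "B = b + smult \<delta> (qq ^ m)"
      "C = - (smult \<kappa> b + smult \<epsilon> (qq ^ m)) * qq\<^sup>2" "D = b - smult \<gamma> (qq ^ m)"
      "A' = smult (\<delta> + \<gamma> + a * \<kappa>) b + smult (a * \<epsilon> - \<gamma> * (\<delta> + \<gamma>)) (qq ^ m)"
      "B' = b - smult (2 * \<gamma> + \<delta>) (qq ^ m)" "C' = - (qq ^ m)" "k = m - 2"
  shows "NextABC A B C A' B' C' k a D"
proof -
  have m_eq: "m = k + 2"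
    using m shape(8) by simp
  have "smult \<kappa> b + smult \<epsilon> (qq ^ m) \<noteq> 0"
  proof
    assume zero: "smult \<kappa> b + smult \<epsilon> (qq ^ m) = 0"
    have "\<kappa> = coeff (smult \<kappa> b + smult \<epsilon> (qq ^ m)) 0"
      using b m by (simp add: qq_power_eq_monom)
    then have "\<kappa> = 0" "smult \<epsilon> (qq ^ m) = 0"
      using zero by simp_all
    then show False
      using \<kappa>\<epsilon> by (simp add: qq_nonzero)
  qed
  then have C: "- (smult \<kappa> b + smult \<epsilon> (qq ^ m)) * qq\<^sup>2 \<noteq> 0"
      "coeff (- (smult \<kappa> b + smult \<epsilon> (qq ^ m)) * qq\<^sup>2) 0 = 0"
    by (simp_all add: qq_nonzero coeff_mult_0 qq_power_eq_monom)
  have "NextABC (qq ^ k * [:a:]) (b + smult \<delta> (qq ^ m))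
      (- (smult \<kappa> b + smult \<epsilon> (qq ^ m)) * qq\<^sup>2)
      (smult (\<delta> + \<gamma> + a * \<kappa>) b + smult (a * \<epsilon> - \<gamma> * (\<delta> + \<gamma>)) (qq ^ m))
      (b - smult (2 * \<gamma> + \<delta>) (qq ^ m)) (- (qq ^ m)) k a (b - smult \<gamma> (qq ^ m))"
  proof (rule NextABC_intro[where V = "[:a * (\<delta> + \<gamma>):]"
        and W = "- smult a (smult \<kappa> b + smult \<epsilon> (qq ^ m))"])
    show "degree (b - smult \<gamma> (qq ^ m)) \<le> k + 1"
      using b m_eq by simp
    show "smult a (b + smult \<delta> (qq ^ m))
        = (b - smult \<gamma> (qq ^ m)) * [:a:] + qq ^ (k + 2) * [:a * (\<delta> + \<gamma>):]"
      by (simp add: m_eq algebra_simps smult_distribs)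
    show "smult a (- (smult \<kappa> b + smult \<epsilon> (qq ^ m)) * qq\<^sup>2)
        = qq\<^sup>2 * - smult a (smult \<kappa> b + smult \<epsilon> (qq ^ m))"
      by (simp add: algebra_simps smult_distribs)
    show "(smult (\<delta> + \<gamma> + a * \<kappa>) b + smult (a * \<epsilon> - \<gamma> * (\<delta> + \<gamma>)) (qq ^ m)) * qq ^ (k + 2)
        = (b + smult \<delta> (qq ^ m)) * (b - smult \<gamma> (qq ^ m))
          - smult (inverse a) ((b - smult \<gamma> (qq ^ m))\<^sup>2 * [:a:])
          - smult a (- (smult \<kappa> b + smult \<epsilon> (qq ^ m)) * qq\<^sup>2 * qq ^ k)"
      using a by (simp add: m_eq algebra_simps smult_distribs power2_eq_square power_add)
    show "smult a (b - smult (2 * \<gamma> + \<delta>) (qq ^ m))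
        = smult 2 ([:a:] * (b - smult \<gamma> (qq ^ m))) - smult a (b + smult \<delta> (qq ^ m))"
      by (simp add: algebra_simps smult_distribs numeral_poly)
    show "- (qq ^ m) = - smult (inverse a) ([:a:] * qq ^ (k + 2))"
      using a by (simp add: m_eq)
  qed (use a b m C in \<open>simp_all add: qq_power_eq_monom\<close>)
  then show ?thesis
    unfolding shape(1-7) shape(8)[symmetric] by (simp add: mult.commute)
qed

lemma NextABC_odd_shape:
  fixes b :: "K poly" and a r \<sigma> :: K
  assumes m: "2 \<le> m" and b: "coeff b 0 = 1" and a: "a \<noteq> 0"
    and shape: "A = smult a b + smult r (qq ^ m)" "B = b + smult \<sigma> (qq ^ m)" "C = - (qq ^ m)"
      "A' = smult (\<sigma> + a - r / a) (qq ^ (m - 2))" "B' = b + smult (2 * r / a - \<sigma>) (qq ^ m)"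
      "C' = - (b + smult (r / a) (qq ^ m)) * qq\<^sup>2" "k = 0" "D = 1"
  shows "NextABC A B C A' B' C' k a D"
proof -
  define l where "l = m - 2"
  have m_eq: "m = l + 2"
    using m by (simp add: l_def)
  have A0: "coeff (smult a b + smult r (qq ^ m)) 0 = a"
    using b m by (simp add: qq_power_eq_monom)
  have "NextABC (qq ^ 0 * (smult a b + smult r (qq ^ m))) (b + smult \<sigma> (qq ^ m)) (- (qq ^ m))
      (smult (\<sigma> + a - r / a) (qq ^ l)) (b + smult (2 * r / a - \<sigma>) (qq ^ m))
      (- (b + smult (r / a) (qq ^ m)) * qq\<^sup>2) 0 a 1"
  proof (rule NextABC_intro[where V = "smult (a * \<sigma> - r) (qq ^ l)" and W = "- smult a (qq ^ l)"])
    show "smult a (b + smult \<sigma> (qq ^ m))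
        = 1 * (smult a b + smult r (qq ^ m)) + qq ^ (0 + 2) * smult (a * \<sigma> - r) (qq ^ l)"
      by (simp add: m_eq algebra_simps smult_distribs power_add)
    show "smult a (- (qq ^ m)) = qq\<^sup>2 * - smult a (qq ^ l)"
      by (simp add: m_eq power_add power2_eq_square mult_ac)
    show "smult (\<sigma> + a - r / a) (qq ^ l) * qq ^ (0 + 2)
        = (b + smult \<sigma> (qq ^ m)) * 1 - smult (inverse a) (1\<^sup>2 * (smult a b + smult r (qq ^ m)))
          - smult a (- (qq ^ m) * qq ^ 0)"
      using a by (simp add: m_eq algebra_simps smult_distribs power_add divide_inverse)
    show "smult a (b + smult (2 * r / a - \<sigma>) (qq ^ m))
        = smult 2 ((smult a b + smult r (qq ^ m)) * 1) - smult a (b + smult \<sigma> (qq ^ m))"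
      using a by (simp add: algebra_simps smult_distribs numeral_poly)
    show "- (b + smult (r / a) (qq ^ m)) * qq\<^sup>2
        = - smult (inverse a) ((smult a b + smult r (qq ^ m)) * qq ^ (0 + 2))"
      using a by (simp add: algebra_simps smult_distribs divide_inverse power2_eq_square)
  qed (use a b m A0 in \<open>simp_all add: qq_nonzero qq_power_eq_monom\<close>)
  then show ?thesis
    unfolding shape by (simp add: l_def)
qed

lemma Aseq_even: "Aseq m (2 * j) = smult (aseq m (2 * j)) (qq ^ (m - 2))"
  by (simp add: Aseq_def aseq_def Let_def)

lemma aseq_even:
  "0 < j \<Longrightarrow> aseq m (2 * j) = (- 1) ^ m * tt ^ m * J m j / J m (Suc j)"
  by (simp add: aseq_def Let_def power_minus[of tt m])

lemma Bseq7_even: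
  "Bseq7 m (2 * j) = beta m + smult (2 * (1 / J m (Suc j) - 1) * (- 1) ^ m) (qq ^ m)"
  by (simp add: Bseq7_def Let_def power_minus_poly)

lemma Cseq_even:
  "0 < j \<Longrightarrow> Cseq m (2 * j) = - (beta m
      + smult ((1 / J m (Suc j) - tt ^ (m * j) / J m j - 2) * (- 1) ^ m) (qq ^ m)) * qq\<^sup>2"
  by (simp add: Cseq_def Let_def power_minus_poly power_add algebra_simps power2_eq_square)

lemma Dseq_even: "Dseq m (2 * j) = beta m - smult ((1 + tt ^ m) * (- 1) ^ m) (qq ^ m)"
  by (simp add: Dseq_def power_minus_poly)

lemma Aseq_odd: "Aseq m (2 * j + 1) = smult (aseq m (2 * j + 1)) (beta m)
    + smult ((1 - 2 * J m (Suc (Suc j))) / J m (Suc j)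
        - tt ^ (m * Suc j) * J m (Suc (Suc j)) / (J m (Suc j))\<^sup>2) (qq ^ m)"
  by (simp add: Aseq_def aseq_def Let_def)

lemma aseq_odd: "aseq m (2 * j + 1) = (- 1) ^ m * J m (Suc (Suc j)) / J m (Suc j)"
  by (simp add: aseq_def Let_def)

lemma Bseq7_odd: "Bseq7 m (2 * j + 1) = beta m
    - smult (2 * (tt ^ (m * Suc j) / J m (Suc j) + 1) * (- 1) ^ m) (qq ^ m)"
  by (simp add: Bseq7_def Let_def power_minus_poly)

lemma Cseq_odd: "Cseq m (2 * j + 1) = - (qq ^ m)"
  by (simp add: Cseq_def Let_def)

lemma Dseq_odd: "Dseq m (2 * j + 1) = 1"
  by (simp add: Dseq_def)

lemma NextABC_step_0:
  assumes m: "2 \<le> m"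
  shows "NextABC (Aseq m 0) (Bseq7 m 0) (Cseq m 0) (Aseq m 1) (Bseq7 m 1) (Cseq m 1)
      (kseq m 0) (aseq m 0) (Dseq m 0)"
proof -
  define s u where "s = (- 1 :: K) ^ m" and "u = tt ^ m"
  have s2: "s * s = 1"
    by (simp add: s_def flip: power_mult_distrib)
  have J12: "J m (Suc 0) = 1" "J m (Suc (Suc 0)) = 1 + u"
    by (simp_all add: J_def qint_def u_def)
  show ?thesis
  proof (rule NextABC_even_shape[where b = "beta m" and \<delta> = 0 and \<gamma> = "(1 + u) * s" and \<kappa> = 0
        and \<epsilon> = u])
    show "Aseq m 1 = smult (0 + (1 + u) * s + aseq m 0 * 0) (beta m)
        + smult (aseq m 0 * u - (1 + u) * s * (0 + (1 + u) * s)) (qq ^ m)"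
      using Aseq_odd[of m 0] aseq_odd[of m 0] s2
      by (simp add: J12 s_def u_def aseq_def algebra_simps power2_eq_square)
    show "Cseq m 0 = - (smult 0 (beta m) + smult u (qq ^ m)) * qq\<^sup>2"
      by (simp add: Cseq_def u_def power_add power2_eq_square mult_ac)
    show "Bseq7 m 1 = beta m - smult (2 * ((1 + u) * s) + 0) (qq ^ m)"
      using Bseq7_odd[of m 0] by (simp add: J12 s_def u_def algebra_simps)
  qed (use m in \<open>simp_all add: coeff_beta_0 degree_beta_minus_top tt_nonzero s_def u_def J12
      Aseq_def aseq_def kseq_def Bseq7_def Dseq_def power_minus_poly Cseq_odd[of m 0, simplified]\<close>)
qed

lemma NextABC_even_step:
  assumes m: "2 \<le> m" and j: "0 < j"
  shows "NextABC (Aseq m (2 * j)) (Bseq7 m (2 * j)) (Cseq m (2 * j))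
      (Aseq m (2 * j + 1)) (Bseq7 m (2 * j + 1)) (Cseq m (2 * j + 1))
      (kseq m (2 * j)) (aseq m (2 * j)) (Dseq m (2 * j))"
proof -
  define s u J0 J1 J2 where "s = (- 1 :: K) ^ m" and "u = tt ^ m"
    and "J0 = J m j" and "J1 = J m (Suc j)" and "J2 = J m (Suc (Suc j))"
  define a \<delta> \<gamma> \<epsilon> where "a = s * u * J0 / J1" and "\<delta> = 2 * (1 / J1 - 1) * s"
    and "\<gamma> = (1 + u) * s" and "\<epsilon> = (1 / J1 - (J1 - J0) / J0 - 2) * s"
  have s2: "s * s = 1"
    by (simp add: s_def flip: power_mult_distrib)
  have recurrence: "J1 = 1 + u * J0" "J2 = 1 + u * J1"
    by (simp_all add: J0_def J1_def J2_def u_def J_Suc)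
  have increments: "tt ^ (m * j) = J1 - J0" "tt ^ (m * Suc j) = J2 - J1"
    by (simp_all add: J0_def J1_def J2_def J_Suc_eq_add)
  have nonzero: "J0 \<noteq> 0" "J1 \<noteq> 0" "u \<noteq> 0" "s \<noteq> 0"
    using j s2 by (auto simp: J0_def J1_def u_def J_nonzero tt_nonzero)
  have a_next: "s * J2 / J1 = \<delta> + \<gamma> + a * 1"
    using nonzero unfolding a_def \<delta>_def \<gamma>_def
    by (simp add: field_simps) (use recurrence in algebra)
  have r_next: "(1 - 2 * J2) / J1 - (J2 - J1) * J2 / J1\<^sup>2 = a * \<epsilon> - \<gamma> * (\<delta> + \<gamma>)"
    using nonzero unfolding a_def \<delta>_def \<gamma>_def \<epsilon>_def
    by (simp add: field_simps) (use recurrence s2 in algebra)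
  have \<sigma>_next: "2 * ((J2 - J1) / J1 + 1) * s = 2 * \<gamma> + \<delta>"
    using nonzero unfolding \<delta>_def \<gamma>_def
    by (simp add: field_simps) (use recurrence in algebra)
  show ?thesis
  proof (rule NextABC_even_shape[where b = "beta m" and \<delta> = \<delta> and \<gamma> = \<gamma> and \<kappa> = 1 and \<epsilon> = \<epsilon>])
    show "aseq m (2 * j) \<noteq> 0" "Aseq m (2 * j) = smult (aseq m (2 * j)) (qq ^ (m - 2))"
      using j nonzero by (simp_all add: aseq_even Aseq_even s_def u_def J0_def J1_def)
    show "Aseq m (2 * j + 1) = smult (\<delta> + \<gamma> + aseq m (2 * j) * 1) (beta m)
        + smult (aseq m (2 * j) * \<epsilon> - \<gamma> * (\<delta> + \<gamma>)) (qq ^ m)"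
      unfolding Aseq_odd aseq_odd aseq_even[OF j] increments
      unfolding s_def[symmetric] u_def[symmetric] J0_def[symmetric] J1_def[symmetric]
        J2_def[symmetric] a_def[symmetric]
      by (simp only: a_next r_next)
    show "Bseq7 m (2 * j + 1) = beta m - smult (2 * \<gamma> + \<delta>) (qq ^ m)"
      unfolding Bseq7_odd increments s_def[symmetric] J1_def[symmetric] J2_def[symmetric]
      by (simp only: \<sigma>_next)
    show "Cseq m (2 * j + 1) = - (qq ^ m)"
      by (rule Cseq_odd)
  qed (use m j in \<open>simp_all add: coeff_beta_0 degree_beta_minus_top kseq_def Bseq7_even
      Cseq_even Dseq_even increments s_def u_def \<delta>_def \<gamma>_def \<epsilon>_def J0_def J1_def\<close>)
qed

lemma NextABC_odd_step:
  assumes m: "2 \<le> m"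
  shows "NextABC (Aseq m (2 * j + 1)) (Bseq7 m (2 * j + 1)) (Cseq m (2 * j + 1))
      (Aseq m (2 * Suc j)) (Bseq7 m (2 * Suc j)) (Cseq m (2 * Suc j))
      (kseq m (2 * j + 1)) (aseq m (2 * j + 1)) (Dseq m (2 * j + 1))"
proof -
  define s u J1 J2 where "s = (- 1 :: K) ^ m" and "u = tt ^ m"
    and "J1 = J m (Suc j)" and "J2 = J m (Suc (Suc j))"
  define a r \<sigma> \<epsilon> where "a = s * J2 / J1" and "r = (1 - 2 * J2) / J1 - (J2 - J1) * J2 / J1\<^sup>2"
    and "\<sigma> = - (2 * ((J2 - J1) / J1 + 1) * s)" and "\<epsilon> = (1 / J2 - (J2 - J1) / J1 - 2) * s"
  have s2: "s * s = 1"
    by (simp add: s_def flip: power_mult_distrib)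
  have recurrence: "J2 = 1 + u * J1"
    by (simp add: J1_def J2_def u_def J_Suc)
  have increment: "tt ^ (m * Suc j) = J2 - J1"
    by (simp add: J1_def J2_def J_Suc_eq_add)
  have nonzero: "J1 \<noteq> 0" "J2 \<noteq> 0" "s \<noteq> 0"
    using s2 by (auto simp: J1_def J2_def J_nonzero)
  have \<epsilon>_eq: "\<epsilon> = r / a"
    using nonzero unfolding a_def r_def \<epsilon>_def
    by (simp add: field_simps) (use s2 in algebra)
  have a_next: "s * u * J1 / J2 = \<sigma> + a - \<epsilon>"
    using nonzero unfolding a_def \<sigma>_def \<epsilon>_def
    by (simp add: field_simps) (use recurrence in algebra)
  have \<delta>_next: "2 * (1 / J2 - 1) * s = 2 * \<epsilon> - \<sigma>"
    using nonzero unfolding a_def \<sigma>_def \<epsilon>_def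
    by (simp add: field_simps)
  show ?thesis
  proof (rule NextABC_odd_shape[where b = "beta m" and r = r and \<sigma> = \<sigma>])
    show "aseq m (2 * j + 1) \<noteq> 0"
      unfolding aseq_odd using nonzero by (simp add: s_def J1_def J2_def)
    show "Aseq m (2 * j + 1) = smult (aseq m (2 * j + 1)) (beta m) + smult r (qq ^ m)"
      unfolding Aseq_odd increment J1_def[symmetric] J2_def[symmetric] r_def ..
    show "Bseq7 m (2 * j + 1) = beta m + smult \<sigma> (qq ^ m)"
      unfolding Bseq7_odd increment s_def[symmetric] J1_def[symmetric] J2_def[symmetric] \<sigma>_def
      by simp
    show "Aseq m (2 * Suc j)
        = smult (\<sigma> + aseq m (2 * j + 1) - r / aseq m (2 * j + 1)) (qq ^ (m - 2))"
      unfolding Aseq_even aseq_even[OF zero_less_Suc] aseq_odd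
      unfolding s_def[symmetric] u_def[symmetric] J1_def[symmetric] J2_def[symmetric]
        a_def[symmetric]
      by (simp only: a_next \<epsilon>_eq)
    show "Bseq7 m (2 * Suc j) = beta m + smult (2 * r / aseq m (2 * j + 1) - \<sigma>) (qq ^ m)"
      unfolding Bseq7_even aseq_odd
      unfolding s_def[symmetric] J1_def[symmetric] J2_def[symmetric] a_def[symmetric]
      by (simp only: \<delta>_next \<epsilon>_eq times_divide_eq_right)
    show "Cseq m (2 * Suc j) = - (beta m + smult (r / aseq m (2 * j + 1)) (qq ^ m)) * qq\<^sup>2"
      unfolding Cseq_even[OF zero_less_Suc] aseq_odd increment
      unfolding s_def[symmetric] J1_def[symmetric] J2_def[symmetric] \<epsilon>_def[symmetric]
        a_def[symmetric]
      by (simp only: \<epsilon>_eq)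
    show "Cseq m (2 * j + 1) = - (qq ^ m)"
      by (rule Cseq_odd)
    show "Dseq m (2 * j + 1) = 1"
      by (rule Dseq_odd)
  qed (use m in \<open>simp_all add: coeff_beta_0 kseq_def\<close>)
qed

theorem lemma7p1:
  fixes m :: nat
  assumes "m \<ge> 2"
  shows "\<forall>n. NextABC (Aseq m n) (Bseq7 m n) (Cseq m n)
                     (Aseq m (n + 1)) (Bseq7 m (n + 1)) (Cseq m (n + 1))
                     (kseq m n) (aseq m n) (Dseq m n)"
proof
  fix n :: nat
  consider "n = 0" | j where "0 < j" "n = 2 * j" | j where "n = 2 * j + 1"
    by (metis evenE oddE gr0I mult_0_right)
  then show "NextABC (Aseq m n) (Bseq7 m n) (Cseq m n)
      (Aseq m (n + 1)) (Bseq7 m (n + 1)) (Cseq m (n + 1)) (kseq m n) (aseq m n) (Dseq m n)"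
  proof cases
    case 1
    then show ?thesis using NextABC_step_0[OF assms] by simp
  next
    case (2 j)
    then show ?thesis using NextABC_even_step[OF assms 2(1)] by simp
  next
    case (3 j)
    then show ?thesis using NextABC_odd_step[OF assms, of j] by simp
  qed
qed

end
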